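(* Let $G$ be a Garside group with Garside element $\Delta$, and let $H$ be an abelian subgroup of $G$ all of whose elements are periodic. Then the restriction $\mathrm{INF}|_H: H\to\mathbb Q$ is an injective group homomorphism. In particular, $H$ is cyclic.
   Context: $G$ is a Garside group: the group of fractions of a Garside monoid $G^+$ (an atomic, left and right cancellative monoid that is a lattice under both the prefix order and the suffix order, with a Garside element $\Delta$ whose left and right divisors coincide, form a finite set, and generate $G^+$); some positive power of $\Delta$ is central. For $g,h\in G$, $g\le_L h$ means $g^{-1}h\in G^+$; $\inf(g)=\max\{r\in\mathbb Z:\Delta^r\le_L g\}$ and $\mathrm{INF}(g)=\lim_{n\to\infty}\inf(g^n)/n$ (this limit exists and is rational). An element $g$ is periodic if $g=1$ or $g^k$ is conjugate to $\Delta^\ell$ for some nonzero integers $k,\ell$. *)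

theory Defs
  imports Complex_Main "HOL-Algebra.Generated_Groups"
begin

definition lprefix :: "('a, 'b) monoid_scheme \<Rightarrow> 'a set \<Rightarrow> 'a \<Rightarrow> 'a \<Rightarrow> bool" where
  "lprefix G P a b \<longleftrightarrow> (\<exists>c\<in>P. b = a \<otimes>\<^bsub>G\<^esub> c)"

definition rsuffix :: "('a, 'b) monoid_scheme \<Rightarrow> 'a set \<Rightarrow> 'a \<Rightarrow> 'a \<Rightarrow> bool" where
  "rsuffix G P a b \<longleftrightarrow> (\<exists>c\<in>P. b = c \<otimes>\<^bsub>G\<^esub> a)"

definition is_lattice_on :: "'a set \<Rightarrow> ('a \<Rightarrow> 'a \<Rightarrow> bool) \<Rightarrow> bool" where
  "is_lattice_on P rel \<longleftrightarrow>
     (\<forall>a\<in>P. \<forall>b\<in>P.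
        (\<exists>m\<in>P. rel m a \<and> rel m b \<and> (\<forall>c\<in>P. rel c a \<and> rel c b \<longrightarrow> rel c m)) \<and>
        (\<exists>j\<in>P. rel a j \<and> rel b j \<and> (\<forall>c\<in>P. rel a c \<and> rel b c \<longrightarrow> rel j c)))"

definition garside_group :: "('a, 'b) monoid_scheme \<Rightarrow> 'a set \<Rightarrow> 'a \<Rightarrow> bool" where
  "garside_group G P D \<longleftrightarrow>
     group G \<and> P \<subseteq> carrier G \<and>
     \<one>\<^bsub>G\<^esub> \<in> P \<and> (\<forall>a\<in>P. \<forall>b\<in>P. a \<otimes>\<^bsub>G\<^esub> b \<in> P) \<and>
     \<comment> \<open>G is the group of fractions of P (P embeds in G and generates it)\<close>
     carrier G = generate G P \<and>
     \<comment> \<open>atomicity\<close>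
     (\<exists>\<nu>::'a \<Rightarrow> nat. (\<forall>a\<in>P. a \<noteq> \<one>\<^bsub>G\<^esub> \<longrightarrow> \<nu> a > 0) \<and>
        (\<forall>a\<in>P. \<forall>b\<in>P. \<nu> (a \<otimes>\<^bsub>G\<^esub> b) \<ge> \<nu> a + \<nu> b)) \<and>
     \<comment> \<open>lattice for prefix and suffix orders\<close>
     is_lattice_on P (lprefix G P) \<and> is_lattice_on P (rsuffix G P) \<and>
     \<comment> \<open>Garside element\<close>
     D \<in> P \<and>
     {a\<in>P. lprefix G P a D} = {a\<in>P. rsuffix G P a D} \<and>
     finite {a\<in>P. lprefix G P a D} \<and>
     (\<forall>x\<in>P. \<exists>xs. set xs \<subseteq> {a\<in>P. lprefix G P a D} \<and> x = foldr (\<otimes>\<^bsub>G\<^esub>) xs \<one>\<^bsub>G\<^esub>)"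

definition leL :: "('a, 'b) monoid_scheme \<Rightarrow> 'a set \<Rightarrow> 'a \<Rightarrow> 'a \<Rightarrow> bool" where
  "leL G P g h \<longleftrightarrow> inv\<^bsub>G\<^esub> g \<otimes>\<^bsub>G\<^esub> h \<in> P"

definition ginf :: "('a, 'b) monoid_scheme \<Rightarrow> 'a set \<Rightarrow> 'a \<Rightarrow> 'a \<Rightarrow> int" where
  "ginf G P D g = (GREATEST r::int. leL G P (D [^]\<^bsub>G\<^esub> r) g)"

definition gINF :: "('a, 'b) monoid_scheme \<Rightarrow> 'a set \<Rightarrow> 'a \<Rightarrow> 'a \<Rightarrow> real" where
  "gINF G P D g = lim (\<lambda>n::nat. real_of_int (ginf G P D (g [^]\<^bsub>G\<^esub> n)) / real n)"

definition periodic :: "('a, 'b) monoid_scheme \<Rightarrow> 'a \<Rightarrow> 'a \<Rightarrow> bool" where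
  "periodic G D g \<longleftrightarrow> g = \<one>\<^bsub>G\<^esub> \<or>
     (\<exists>k::int. \<exists>l::int. k \<noteq> 0 \<and> l \<noteq> 0 \<and>
        (\<exists>x\<in>carrier G. g [^]\<^bsub>G\<^esub> k = x \<otimes>\<^bsub>G\<^esub> (D [^]\<^bsub>G\<^esub> l) \<otimes>\<^bsub>G\<^esub> inv\<^bsub>G\<^esub> x))"

end

theory Submission
  imports Defs
begin

text \<open>
  Conjugation by \<open>\<Delta>\<close> permutes the finitely many simple elements, so some power
  \<open>Z = \<Delta>\<^sup>e\<close> is central.  Every element becomes positive after multiplication by a power of \<open>Z\<close>;
  hence finite sets have joins for the prefix order \<open>\<preceq>\<close> on the whole group, and \<open>inf\<close> is well defined.
  If \<open>x\<^sup>n = c\<close> is central and positive and \<open>y\<close> is the join of \<open>1, x, \<dots>, x\<^sup>n\<^sup>-\<^sup>1\<close>, then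
  \<open>y \<preceq> x\<^sup>k y \<preceq> y c\<close>; with \<open>c = 1\<close> this shows that the group is torsion-free, and with \<open>c = Z\<close> it shows
  that an \<open>n\<close>-th root of \<open>Z\<close> yields \<open>n\<close> distinct prefixes of \<open>Z\<close>, bounding \<open>n\<close>.
  A periodic element \<open>h\<close> satisfies \<open>h\<^sup>N = Z\<^sup>a\<close>, whence \<open>INF(h) = e a / N\<close>; for commuting periodic elements
  this makes \<open>INF\<close> additive, and torsion-freeness makes it injective.  Writing \<open>a/N\<close> in lowest terms
  produces a root of \<open>Z\<close>, so the denominators of \<open>INF\<close> on \<open>H\<close> divide a fixed factorial; an injective
  homomorphism into a lattice \<open>c \<int>\<close> forces \<open>H\<close> to be cyclic.
\<close>

lemma int_Greatest:
  fixes Q :: "int \<Rightarrow> bool"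
  assumes "Q a" and bound: "\<And>r. Q r \<Longrightarrow> r \<le> b"
  shows "Q (GREATEST r. Q r)" and "\<And>r. Q r \<Longrightarrow> r \<le> (GREATEST r. Q r)"
proof -
  define R where "R = {r. Q r \<and> a \<le> r}"
  have fin: "finite R" by (rule finite_subset[of _ "{a..b}"]) (auto simp: R_def bound)
  have "a \<in> R" using assms(1) by (simp add: R_def)
  then have max_in: "Q (Max R)" and max_ge: "Max R \<ge> a"
    using Max_in[OF fin] Max_ge[OF fin] by (auto simp: R_def)
  have above: "r \<le> Max R" if "Q r" for r
    using that Max_ge[OF fin, of r] max_ge by (cases "a \<le> r") (auto simp: R_def)
  have "(GREATEST r. Q r) = Max R" using max_in above by (intro Greatest_equality)
  then show "Q (GREATEST r. Q r)" and "\<And>r. Q r \<Longrightarrow> r \<le> (GREATEST r. Q r)"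
    using max_in above by auto
qed

lemma quasilinear_limit:
  fixes f :: "nat \<Rightarrow> int" and c :: int
  assumes N: "N > 0" and f: "\<And>n. f n = c * int (n div N) + f (n mod N)"
  shows "(\<lambda>n. real_of_int (f n) / real n) \<longlonglongrightarrow> real_of_int c / real N"
proof -
  define K where "K = real_of_int (Max ((\<lambda>r. \<bar>f r\<bar>) ` {..<N})) + \<bar>real_of_int c\<bar>"
  have bound: "norm (f n / real n - c / real N) \<le> norm (1 / real n) * K" if n: "n \<ge> 1" for n
  proof -
    define r where "r = n mod N"
    have rN: "r < N" using N by (simp add: r_def)
    have n_eq: "real n = real N * real (n div N) + real r"
      by (metis r_def div_mult_mod_eq of_nat_add of_nat_mult mult.commute)
    have "f n / real n - c / real N = (f r - c * real r / real N) / real n"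
      using N n f[of n] n_eq by (simp add: r_def field_simps)
    moreover have "\<bar>f r - c * real r / real N\<bar> \<le> K"
    proof -
      have "\<bar>c * real r / real N\<bar> \<le> \<bar>real_of_int c\<bar>"
        using rN mult_left_le[of "real r / real N" "\<bar>real_of_int c\<bar>"] by (simp add: abs_mult)
      moreover have "\<bar>f r\<bar> \<le> Max ((\<lambda>r. \<bar>f r\<bar>) ` {..<N})" using rN by (intro Max_ge) auto
      ultimately show ?thesis unfolding K_def
        using abs_triangle_ineq4[of "real_of_int (f r)" "c * real r / real N"] by linarith
    qed
    ultimately have "\<bar>f n / real n - c / real N\<bar> \<le> K / real n"
      using n by (simp add: abs_divide divide_right_mono)
    then show ?thesis using n by simp
  qed
  have "(\<lambda>n. f n / real n - c / real N) \<longlonglongrightarrow> 0"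
    using bound by (intro tendsto_0_le[OF lim_const_over_n[of 1] eventually_sequentiallyI[of 1]])
  then show ?thesis by (simp add: LIM_zero_iff)
qed

lemma (in group) inv_cancel_left [simp]: "x \<in> carrier G \<Longrightarrow> y \<in> carrier G \<Longrightarrow> inv x \<otimes> (x \<otimes> y) = y"
  by (simp add: m_assoc[symmetric])

lemma (in group) cancel_inv_left [simp]: "x \<in> carrier G \<Longrightarrow> y \<in> carrier G \<Longrightarrow> x \<otimes> (inv x \<otimes> y) = y"
  by (simp add: m_assoc[symmetric])

text \<open>The elements commuting with \<open>z\<close>; a subgroup, which lets commutation propagate from generators.\<close>
definition commutant :: "('a, 'b) monoid_scheme \<Rightarrow> 'a \<Rightarrow> 'a set" where
  "commutant G z = {g \<in> carrier G. z \<otimes>\<^bsub>G\<^esub> g = g \<otimes>\<^bsub>G\<^esub> z}"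

lemma (in group) commutant_subgroup:
  assumes z: "z \<in> carrier G" shows "subgroup (commutant G z) G"
proof (rule subgroupI)
  fix g assume "g \<in> commutant G z"
  then have g: "g \<in> carrier G" and gz: "z \<otimes> g = g \<otimes> z" by (auto simp: commutant_def)
  have "z \<otimes> inv g = inv g \<otimes> (g \<otimes> z) \<otimes> inv g" using g z by (simp add: m_assoc[symmetric])
  also have "\<dots> = inv g \<otimes> (z \<otimes> g) \<otimes> inv g" using gz by simp
  also have "\<dots> = inv g \<otimes> z" using g z by (simp add: m_assoc)
  finally show "inv g \<in> commutant G z" using g by (simp add: commutant_def)
next
  fix g h assume "g \<in> commutant G z" "h \<in> commutant G z"
  then show "g \<otimes> h \<in> commutant G z" using z
    by (auto simp: commutant_def) (metis m_assoc)
qed (use z in \<open>auto simp: commutant_def\<close>)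

lemma (in group) commute_int_pow:
  assumes "x \<in> carrier G" "g \<in> carrier G" "x \<otimes> g = g \<otimes> x"
  shows "x [^] (k::int) \<otimes> g = g \<otimes> x [^] k"
proof -
  have "x \<in> commutant G g" using assms by (simp add: commutant_def)
  then have "x [^] k \<in> commutant G g" by (rule subgroup_int_pow_closed[OF commutant_subgroup[OF assms(2)]])
  then show ?thesis by (simp add: commutant_def)
qed

lemma (in group) conj_nat_pow:
  assumes "x \<in> carrier G" "y \<in> carrier G"
  shows "(x \<otimes> y \<otimes> inv x) [^] (n::nat) = x \<otimes> y [^] n \<otimes> inv x"
proof (induction n)
  case (Suc n)
  have "(x \<otimes> y \<otimes> inv x) [^] Suc n = (x \<otimes> y [^] n \<otimes> inv x) \<otimes> (x \<otimes> y \<otimes> inv x)"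
    using Suc by simp
  also have "\<dots> = x \<otimes> (y [^] n \<otimes> y) \<otimes> inv x" using assms by (simp add: m_assoc)
  finally show ?case by simp
qed (use assms in simp)

lemma (in group) additive_int_pow:
  fixes \<phi> :: "'a \<Rightarrow> 'c :: ring_1"
  assumes H: "subgroup H G" and add: "\<And>a b. a \<in> H \<Longrightarrow> b \<in> H \<Longrightarrow> \<phi> (a \<otimes> b) = \<phi> a + \<phi> b"
    and h: "h \<in> H"
  shows "\<phi> (h [^] (k::int)) = of_int k * \<phi> h"
proof -
  have hG: "h \<in> carrier G" using h subgroup.subset[OF H] by blast
  have one: "\<phi> \<one> = 0" using add[of \<one> \<one>] subgroup.one_closed[OF H] by simp
  have nat: "\<phi> (h [^] (n::nat)) = of_nat n * \<phi> h" for n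
  proof (induction n)
    case (Suc n)
    have "h [^] n \<in> H" using subgroup_int_pow_closed[OF H h, of "int n"] by (simp add: int_pow_int)
    then show ?case using Suc add[OF _ h] by (simp add: algebra_simps)
  qed (simp add: one)
  show ?thesis
  proof (cases "k \<ge> 0")
    case True
    then show ?thesis using nat[of "nat k"] by (simp add: pow_nat)
  next
    case False
    have hn: "h [^] nat (-k) \<in> H" using subgroup_int_pow_closed[OF H h, of "int (nat (-k))"] by (simp only: int_pow_int)
    have "h [^] k = inv (h [^] nat (-k))" using False int_pow_neg[OF hG, of "-k"] by (simp add: pow_nat)
    moreover have "\<phi> (inv x) = - \<phi> x" if x: "x \<in> H" for x
    proof -
      have "x \<otimes> inv x = \<one>" using x subgroup.subset[OF H] by auto
      then have "\<phi> x + \<phi> (inv x) = 0" using add[OF x subgroup.m_inv_closed[OF H x]] one by simp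
      then show ?thesis by (metis neg_eq_iff_add_eq_0)
    qed
    ultimately show ?thesis using nat[of "nat (-k)"] hn False by simp
  qed
qed

text \<open>A subgroup admitting an injective homomorphism into the integers is cyclic:
  it is generated by an element whose image is the least positive value.\<close>
lemma (in group) int_hom_cyclic:
  fixes \<phi> :: "'a \<Rightarrow> int"
  assumes H: "subgroup H G" and add: "\<And>a b. a \<in> H \<Longrightarrow> b \<in> H \<Longrightarrow> \<phi> (a \<otimes> b) = \<phi> a + \<phi> b"
    and inj: "inj_on \<phi> H"
  shows "\<exists>h\<in>H. H = generate G {h}"
proof -
  have HG: "H \<subseteq> carrier G" and oneH: "\<one> \<in> H" using H by (auto dest: subgroup.subset subgroup.one_closed)
  have pow: "\<phi> (h [^] (k::int)) = k * \<phi> h" if "h \<in> H" for h k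
    using additive_int_pow[OF H add that] by simp
  have one: "\<phi> \<one> = 0" using pow[OF oneH, of 0] by simp
  have gen_sub: "generate G {h} \<subseteq> H" if "h \<in> H" for h
    by (rule generate_subgroup_incl[OF _ H]) (use that in simp)
  show ?thesis
  proof (cases "\<exists>h\<in>H. \<phi> h \<noteq> 0")
    case False
    then have "h = \<one>" if "h \<in> H" for h using inj_onD[OF inj _ that oneH] one that False by simp
    then have "H = {\<one>}" using oneH by blast
    then show ?thesis using generate_pow[of \<one>] by auto
  next
    case True
    then obtain g where g: "g \<in> H" "\<phi> g \<noteq> 0" by blast
    have "\<phi> (g [^] (1::int)) > 0 \<or> \<phi> (g [^] (-1::int)) > 0" using pow[OF g(1)] g(2) by (simp add: linorder_neq_iff disj_commute)
    then have ex: "\<exists>n::nat. 0 < n \<and> (\<exists>h\<in>H. \<phi> h = int n)"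
      using subgroup_int_pow_closed[OF H g(1)] by (metis zero_less_imp_eq_int)
    define n0 where "n0 = (LEAST n::nat. 0 < n \<and> (\<exists>h\<in>H. \<phi> h = int n))"
    have "0 < n0 \<and> (\<exists>h\<in>H. \<phi> h = int n0)" using LeastI_ex[OF ex] by (simp add: n0_def)
    then obtain h0 where h0: "h0 \<in> H" "\<phi> h0 = int n0" and n0: "n0 > 0" by blast
    have h0G: "h0 \<in> carrier G" using h0 HG by blast
    have "x \<in> generate G {h0}" if x: "x \<in> H" for x
    proof -
      define q where "q = \<phi> x div int n0"
      define w where "w = x \<otimes> h0 [^] (-q)"
      have wH: "w \<in> H" using x subgroup_int_pow_closed[OF H h0(1)] subgroup.m_closed[OF H] by (simp add: w_def)
      have w_mod: "\<phi> w = \<phi> x mod int n0"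
        using add[OF x subgroup_int_pow_closed[OF H h0(1)]] pow[OF h0(1)] h0(2)
        by (simp add: w_def q_def minus_div_mult_eq_mod[symmetric] algebra_simps)
      moreover have "\<phi> w = 0"
      proof (rule ccontr)
        assume "\<phi> w \<noteq> 0"
        then have "\<phi> w > 0" using w_mod n0 pos_mod_sign[of "int n0" "\<phi> x"] by linarith
        then have "0 < nat (\<phi> w) \<and> (\<exists>h\<in>H. \<phi> h = int (nat (\<phi> w)))" using wH by auto
        then have "n0 \<le> nat (\<phi> w)" unfolding n0_def by (rule Least_le)
        moreover have "\<phi> w < int n0" using w_mod n0 by simp
        ultimately show False using \<open>\<phi> w > 0\<close> by (simp add: le_nat_iff)
      qed
      ultimately have "w = \<one>" using inj_onD[OF inj _ wH oneH] one by simp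
      then have "x = h0 [^] q" using x HG h0G int_pow_neg[OF h0G, of q]
        by (simp add: w_def) (metis inv_equality int_pow_closed inv_inv subsetD)
      then show ?thesis using generate_pow[OF h0G] by blast
    qed
    then show ?thesis using h0(1) gen_sub[OF h0(1)] by blast
  qed
qed

text \<open>The same holds for an injective real-valued homomorphism whose values lie in a lattice
  \<open>c \<int>\<close>, since dividing by \<open>c\<close> gives an integer-valued one.\<close>
lemma (in group) lattice_hom_cyclic:
  fixes \<psi> :: "'a \<Rightarrow> real"
  assumes H: "subgroup H G" and add: "\<And>a b. a \<in> H \<Longrightarrow> b \<in> H \<Longrightarrow> \<psi> (a \<otimes> b) = \<psi> a + \<psi> b"
    and inj: "inj_on \<psi> H" and c: "c > 0" and lattice: "\<And>h. h \<in> H \<Longrightarrow> \<exists>z::int. \<psi> h = c * z"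
  shows "\<exists>h\<in>H. H = generate G {h}"
proof (rule int_hom_cyclic[OF H, of "\<lambda>h. \<lfloor>\<psi> h / c\<rfloor>"])
  have scaled: "real_of_int \<lfloor>\<psi> h / c\<rfloor> = \<psi> h / c" if "h \<in> H" for h
    using lattice[OF that] c by auto
  show "\<lfloor>\<psi> (a \<otimes> b) / c\<rfloor> = \<lfloor>\<psi> a / c\<rfloor> + \<lfloor>\<psi> b / c\<rfloor>" if "a \<in> H" "b \<in> H" for a b
  proof -
    have "real_of_int \<lfloor>\<psi> (a \<otimes> b) / c\<rfloor> = real_of_int (\<lfloor>\<psi> a / c\<rfloor> + \<lfloor>\<psi> b / c\<rfloor>)"
      unfolding of_int_add scaled[OF subgroup.m_closed[OF H that]] scaled[OF that(1)] scaled[OF that(2)]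
      using add[OF that] by (simp add: add_divide_distrib)
    then show ?thesis by (simp only: of_int_eq_iff)
  qed
  show "inj_on (\<lambda>h. \<lfloor>\<psi> h / c\<rfloor>) H"
  proof (rule inj_onI)
    fix a b assume ab: "a \<in> H" "b \<in> H" and "\<lfloor>\<psi> a / c\<rfloor> = \<lfloor>\<psi> b / c\<rfloor>"
    then have "\<psi> a / c = \<psi> b / c" using scaled by metis
    then have "\<psi> a = \<psi> b" using c by simp
    then show "a = b" using inj_onD[OF inj _ ab] by simp
  qed
qed

lemma (in group) positive_root:
  assumes x: "x \<in> carrier G" and y: "y \<in> carrier G" and m: "m \<noteq> 0" and xy: "x [^] (m::int) = y [^] (a::int)"
  shows "\<exists>N::nat. N > 0 \<and> (\<exists>b::int. x [^] N = y [^] b)"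
proof -
  have "x [^] nat \<bar>m\<bar> = x [^] (m * sgn m)" using m by (simp add: abs_mult_sgn pow_nat flip: abs_sgn)
  also have "\<dots> = y [^] (a * sgn m)" using x y xy by (simp flip: int_pow_pow)
  finally show ?thesis using m by (intro exI[of _ "nat \<bar>m\<bar>"]) auto
qed

lemma (in group) foldr_in_subgroup:
  assumes "subgroup K G" "set xs \<subseteq> K" shows "foldr (\<otimes>) xs \<one> \<in> K"
  using assms(2) by (induction xs) (auto intro: subgroup.one_closed[OF assms(1)] subgroup.m_closed[OF assms(1)])

locale garside = group G for G (structure) +
  fixes P :: "'a set" and D :: 'a and \<nu> :: "'a \<Rightarrow> nat"
  assumes P_carrier: "P \<subseteq> carrier G" and one_P: "\<one> \<in> P"
    and mult_P: "a \<in> P \<Longrightarrow> b \<in> P \<Longrightarrow> a \<otimes> b \<in> P"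
    and generate_P: "carrier G = generate G P"
    and nu_pos: "a \<in> P \<Longrightarrow> a \<noteq> \<one> \<Longrightarrow> \<nu> a > 0"
    and nu_super: "a \<in> P \<Longrightarrow> b \<in> P \<Longrightarrow> \<nu> (a \<otimes> b) \<ge> \<nu> a + \<nu> b"
    and prefix_lattice: "is_lattice_on P (lprefix G P)"
    and D_P: "D \<in> P"
    and prefixes_suffixes: "{a\<in>P. lprefix G P a D} = {a\<in>P. rsuffix G P a D}"
    and finite_simples: "finite {a\<in>P. lprefix G P a D}"
    and simples_generate: "\<forall>x\<in>P. \<exists>xs. set xs \<subseteq> {a\<in>P. lprefix G P a D} \<and> x = foldr (\<otimes>) xs \<one>"
begin

abbreviation leq (infix "\<preceq>" 50) where "g \<preceq> h \<equiv> leL G P g h"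

definition simples :: "'a set" where "simples = {a\<in>P. lprefix G P a D}"

lemma P_in_carrier [simp]: "a \<in> P \<Longrightarrow> a \<in> carrier G"
  using P_carrier by auto

lemma D_carrier [simp]: "D \<in> carrier G"
  using D_P by simp

lemma simples_P: "s \<in> simples \<Longrightarrow> s \<in> P"
  by (simp add: simples_def)

lemma product_of_simples:
  assumes "p \<in> P" obtains xs where "set xs \<subseteq> simples" "p = foldr (\<otimes>) xs \<one>"
  using simples_generate assms by (auto simp: simples_def)

lemma pow_P: "x \<in> P \<Longrightarrow> x [^] (n::nat) \<in> P"
  by (induction n) (auto simp: one_P mult_P)

lemma nu_one: "\<nu> \<one> = 0"
  using nu_super[OF one_P one_P] by simp

text \<open>Atomicity forces \<open>P\<close> to have no nontrivial invertible elements.\<close>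
lemma positive_unit:
  assumes "a \<in> P" "b \<in> P" "a \<otimes> b = \<one>" shows "a = \<one>"
  using nu_super[OF assms(1,2)] nu_pos[OF assms(1)] assms(3) nu_one by (cases "a = \<one>") auto

text \<open>\<open>\<preceq>\<close> is a partial order on \<open>G\<close> (antisymmetry uses that \<open>P\<close> has no units).\<close>
lemma leq_refl: "g \<in> carrier G \<Longrightarrow> g \<preceq> g"
  by (simp add: leL_def one_P)

lemma leq_trans:
  assumes "g \<in> carrier G" "h \<in> carrier G" "k \<in> carrier G" "g \<preceq> h" "h \<preceq> k" shows "g \<preceq> k"
proof -
  have "inv g \<otimes> k = (inv g \<otimes> h) \<otimes> (inv h \<otimes> k)" using assms by (simp add: m_assoc)
  then show ?thesis using assms mult_P by (simp add: leL_def)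
qed

lemma leq_antisym:
  assumes "g \<in> carrier G" "h \<in> carrier G" "g \<preceq> h" "h \<preceq> g" shows "g = h"
proof -
  have "(inv g \<otimes> h) \<otimes> (inv h \<otimes> g) = \<one>" using assms by (simp add: m_assoc)
  then have "inv g \<otimes> h = \<one>" using positive_unit assms by (auto simp: leL_def)
  then show ?thesis using assms by (metis inv_equality inv_inv l_inv_ex r_inv)
qed

lemma leq_left_mult:
  assumes "c \<in> carrier G" "g \<in> carrier G" "h \<in> carrier G"
  shows "c \<otimes> g \<preceq> c \<otimes> h \<longleftrightarrow> g \<preceq> h"
  using assms by (simp add: leL_def inv_mult_group m_assoc)

lemma leq_positive_above:
  assumes "a \<in> P" "x \<in> carrier G" "a \<preceq> x" shows "x \<in> P"
proof -
  have "x = a \<otimes> (inv a \<otimes> x)" using assms by simp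
  then show ?thesis using assms mult_P by (metis leL_def)
qed

lemma lprefix_iff_leq:
  assumes "a \<in> carrier G" "c \<in> carrier G" shows "lprefix G P a c \<longleftrightarrow> a \<preceq> c"
proof
  assume "lprefix G P a c"
  then show "a \<preceq> c" using assms by (auto simp: lprefix_def leL_def)
next
  assume "a \<preceq> c"
  then have "inv a \<otimes> c \<in> P" "c = a \<otimes> (inv a \<otimes> c)" using assms by (auto simp: leL_def)
  then show "lprefix G P a c" unfolding lprefix_def by blast
qed

text \<open>Conjugation by \<open>D\<close> maps simples to simples: if \<open>s t = D\<close> then \<open>t\<close> is simple,
  so \<open>t u = D\<close> for a simple \<open>u\<close>, and \<open>D\<^sup>-\<^sup>1 s D = u\<close>.\<close>
lemma conj_D_simple:
  assumes s: "s \<in> simples" shows "inv D \<otimes> s \<otimes> D \<in> simples"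
proof -
  have suffix_simple: "t \<in> simples" if "t \<in> P" "r \<otimes> t = D" "r \<in> P" for r t
  proof -
    have "rsuffix G P t D" using that unfolding rsuffix_def by metis
    then show ?thesis using that(1) prefixes_suffixes unfolding simples_def by blast
  qed
  from s obtain t where t: "t \<in> P" "s \<otimes> t = D" by (auto simp: simples_def lprefix_def)
  then have "t \<in> simples" using suffix_simple s simples_P by blast
  then obtain u where u: "u \<in> P" "t \<otimes> u = D" by (auto simp: simples_def lprefix_def)
  then have u_simple: "u \<in> simples" using suffix_simple t by blast
  have sG: "s \<in> carrier G" using s simples_P by simp
  have "s \<otimes> D = s \<otimes> (t \<otimes> u)" using u by simp
  also have "\<dots> = (s \<otimes> t) \<otimes> u" by (rule m_assoc[symmetric]) (use sG t u in auto)
  finally have "s \<otimes> D = D \<otimes> u" using t by simp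
  then have "inv D \<otimes> s \<otimes> D = inv D \<otimes> (D \<otimes> u)" using sG by (simp add: m_assoc)
  then show ?thesis using u u_simple by simp
qed

lemma conj_D_pow_simple:
  assumes "s \<in> simples" shows "inv (D [^] (i::nat)) \<otimes> s \<otimes> D [^] i \<in> simples"
proof (induction i)
  case (Suc i)
  have "inv (D [^] Suc i) \<otimes> s \<otimes> D [^] Suc i = inv D \<otimes> (inv (D [^] i) \<otimes> s \<otimes> D [^] i) \<otimes> D"
    using assms simples_P by (simp add: inv_mult_group m_assoc)
  then show ?case using conj_D_simple[OF Suc] by simp
qed (use assms simples_P in simp)

text \<open>Some positive power of \<open>D\<close> is central: conjugation by powers of \<open>D\<close> permutes the finite
  set of simples, so two powers act identically on them, hence on \<open>P\<close> and on \<open>G = \<langle>P\<rangle>\<close>.\<close>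
lemma D_power_central: "\<exists>e::nat. e > 0 \<and> (\<forall>g\<in>carrier G. D [^] e \<otimes> g = g \<otimes> D [^] e)"
proof -
  define f where "f i = restrict (\<lambda>s. inv (D [^] (i::nat)) \<otimes> s \<otimes> D [^] i) simples" for i
  have "range f \<subseteq> simples \<rightarrow>\<^sub>E simples" using conj_D_pow_simple by (auto simp: f_def)
  moreover have "finite (simples \<rightarrow>\<^sub>E simples)" using finite_simples by (simp add: simples_def finite_PiE)
  ultimately have "finite (range f)" by (rule finite_subset)
  then have "\<not> inj f" using finite_imageD infinite_UNIV_nat by blast
  then obtain i j where "i \<noteq> j" "f i = f j" unfolding inj_def by blast
  then obtain i j where ij: "i < j" "f i = f j" by (metis nat_neq_iff)
  define d where "d = j - i"
  have Dj: "D [^] j = D [^] d \<otimes> D [^] i" using ij by (simp add: d_def nat_pow_mult)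
  have "D [^] d \<otimes> s = s \<otimes> D [^] d" if s: "s \<in> simples" for s
  proof -
    have sG: "s \<in> carrier G" using s simples_P by simp
    have "inv (D [^] i) \<otimes> s \<otimes> D [^] i = inv (D [^] i) \<otimes> (inv (D [^] d) \<otimes> s \<otimes> D [^] d) \<otimes> D [^] i"
      using fun_cong[OF ij(2), of s] s sG by (simp add: f_def Dj inv_mult_group m_assoc)
    then have "s = inv (D [^] d) \<otimes> s \<otimes> D [^] d"
      using sG by simp
    then have "D [^] d \<otimes> s = D [^] d \<otimes> (inv (D [^] d) \<otimes> s \<otimes> D [^] d)" by simp
    then show ?thesis using sG by (simp add: m_assoc)
  qed
  then have simples_commute: "simples \<subseteq> commutant G (D [^] d)"
    using simples_P by (auto simp: commutant_def)
  have K: "subgroup (commutant G (D [^] d)) G" by (rule commutant_subgroup) simp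
  have "P \<subseteq> commutant G (D [^] d)"
  proof
    fix p assume "p \<in> P"
    then obtain xs where "set xs \<subseteq> simples" "p = foldr (\<otimes>) xs \<one>" by (rule product_of_simples)
    then show "p \<in> commutant G (D [^] d)" using foldr_in_subgroup[OF K] simples_commute by blast
  qed
  then have "carrier G \<subseteq> commutant G (D [^] d)"
    unfolding generate_P by (rule generate_subgroup_incl[OF _ K])
  moreover have "d > 0" using ij by (simp add: d_def)
  ultimately show ?thesis by (auto simp: commutant_def)
qed

lemma nu_D_pow: assumes "D \<noteq> \<one>" shows "\<nu> (D [^] (k::nat)) \<ge> k"
proof (induction k)
  case (Suc k)
  then show ?case using nu_super[OF pow_P[OF D_P] D_P, of k] nu_pos[OF D_P assms] by simp
qed simp

text \<open>Elements of bounded length: there are finitely many, as each is a product of at most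
  that many nontrivial simples.\<close>
lemma finite_bounded_length: "finite {p \<in> P. \<nu> p \<le> c}"
proof -
  let ?T = "simples - {\<one>}"
  have len: "length xs \<le> \<nu> (foldr (\<otimes>) xs \<one>) \<and> foldr (\<otimes>) xs \<one> \<in> P" if "set xs \<subseteq> ?T" for xs
    using that
  proof (induction xs)
    case (Cons a xs)
    have a: "a \<in> P" "\<nu> a > 0" using Cons.prems simples_P nu_pos by auto
    have IH: "length xs \<le> \<nu> (foldr (\<otimes>) xs \<one>)" "foldr (\<otimes>) xs \<one> \<in> P" using Cons by auto
    show ?case using nu_super[OF a(1) IH(2)] a IH mult_P by simp
  qed (simp add: one_P)
  have drop_ones: "foldr (\<otimes>) (filter (\<lambda>x. x \<noteq> \<one>) xs) \<one> = foldr (\<otimes>) xs \<one>" if "set xs \<subseteq> simples" for xs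
    using that
  proof (induction xs)
    case (Cons a xs)
    have "foldr (\<otimes>) xs \<one> \<in> carrier G"
      by (rule foldr_in_subgroup[OF subgroup_self]) (use Cons.prems simples_P in auto)
    then show ?case using Cons by auto
  qed simp
  have "{p \<in> P. \<nu> p \<le> c} \<subseteq> (\<lambda>xs. foldr (\<otimes>) xs \<one>) ` {xs. set xs \<subseteq> ?T \<and> length xs \<le> c}"
  proof
    fix p assume p: "p \<in> {p \<in> P. \<nu> p \<le> c}"
    then obtain xs where xs: "set xs \<subseteq> simples" "p = foldr (\<otimes>) xs \<one>" using product_of_simples by blast
    let ?ys = "filter (\<lambda>x. x \<noteq> \<one>) xs"
    have ys: "set ?ys \<subseteq> ?T" and p_ys: "p = foldr (\<otimes>) ?ys \<one>" using xs drop_ones by auto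
    then have "length ?ys \<le> c" using len[OF ys] p by simp
    then show "p \<in> (\<lambda>xs. foldr (\<otimes>) xs \<one>) ` {xs. set xs \<subseteq> ?T \<and> length xs \<le> c}"
      using ys p_ys by blast
  qed
  moreover have "finite {xs. set xs \<subseteq> ?T \<and> length xs \<le> c}"
    using finite_lists_length_le[of ?T c] finite_simples by (simp add: simples_def)
  ultimately show ?thesis by (meson finite_imageI finite_subset)
qed

text \<open>If \<open>D = 1\<close> the group is trivial: all simples, hence all positive elements, are \<open>1\<close>.\<close>
lemma trivial_if_D_one: assumes "D = \<one>" shows "carrier G = {\<one>}"
proof -
  have "s = \<one>" if s: "s \<in> simples" for s
  proof -
    obtain t where t: "t \<in> P" "D = s \<otimes> t" using s unfolding simples_def lprefix_def by blast
    show ?thesis by (rule positive_unit[OF simples_P[OF s] t(1)]) (use t assms in argo)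
  qed
  then have "p \<in> {\<one>}" if p: "p \<in> P" for p
  proof -
    obtain xs where "set xs \<subseteq> simples" "p = foldr (\<otimes>) xs \<one>" using p by (rule product_of_simples)
    moreover have "simples \<subseteq> {\<one>}" using \<open>\<And>s. s \<in> simples \<Longrightarrow> s = \<one>\<close> by blast
    ultimately show ?thesis using foldr_in_subgroup[OF triv_subgroup, of xs] by auto
  qed
  then have "generate G P \<subseteq> {\<one>}" by (intro generate_subgroup_incl[OF _ triv_subgroup]) blast
  then show ?thesis using generate_P by auto
qed


lemma leq_mult_central:
  assumes c: "c \<in> P" "\<And>g. g \<in> carrier G \<Longrightarrow> c \<otimes> g = g \<otimes> c"
    and ab: "a \<in> carrier G" "b \<in> carrier G" "a \<preceq> b"
  shows "a \<otimes> c \<preceq> b \<otimes> c"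
proof -
  have "inv (a \<otimes> c) \<otimes> (b \<otimes> c) = inv c \<otimes> ((inv a \<otimes> b) \<otimes> c)"
    using ab c by (simp add: inv_mult_group m_assoc)
  also have "\<dots> = inv a \<otimes> b" using ab c by (simp flip: c(2))
  finally show ?thesis using ab by (simp add: leL_def)
qed

lemma leq_times_positive: "y \<in> carrier G \<Longrightarrow> c \<in> P \<Longrightarrow> y \<preceq> y \<otimes> c"
  by (simp add: leL_def m_assoc[symmetric])

lemma leq_inv_central:
  assumes c: "c \<in> P" "\<And>g. g \<in> carrier G \<Longrightarrow> c \<otimes> g = g \<otimes> c" and w: "w \<in> carrier G"
  shows "inv c \<otimes> w \<preceq> w"
proof -
  have "inv (inv c \<otimes> w) \<otimes> w = inv w \<otimes> (c \<otimes> w)" using c w by (simp add: inv_mult_group m_assoc)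
  also have "\<dots> = c" using c w by simp
  finally show ?thesis using c by (simp add: leL_def)
qed

definition is_join :: "'a set \<Rightarrow> 'a \<Rightarrow> bool" where
  "is_join A y \<longleftrightarrow> y \<in> carrier G \<and> (\<forall>a\<in>A. a \<preceq> y) \<and> (\<forall>c\<in>carrier G. (\<forall>a\<in>A. a \<preceq> c) \<longrightarrow> y \<preceq> c)"

end

locale garside_central = garside +
  fixes e :: nat
  assumes e_pos: "e > 0"
    and D_pow_central: "g \<in> carrier G \<Longrightarrow> D [^] e \<otimes> g = g \<otimes> D [^] e"
    and D_nontrivial: "D \<noteq> \<one>"
begin

definition Z :: 'a where "Z = D [^] e"

lemma Z_carrier [simp]: "Z \<in> carrier G"
  by (simp add: Z_def)

lemma Z_P: "Z \<in> P"
  by (simp add: Z_def pow_P D_P)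

lemma Z_central: "g \<in> carrier G \<Longrightarrow> Z \<otimes> g = g \<otimes> Z"
  using D_pow_central by (simp add: Z_def)

lemma Z_pow_central: "g \<in> carrier G \<Longrightarrow> Z [^] (k::int) \<otimes> g = g \<otimes> Z [^] k"
  using commute_int_pow[OF Z_carrier _ Z_central] by simp

lemma Z_nat_pow_central: "g \<in> carrier G \<Longrightarrow> Z [^] (k::nat) \<otimes> g = g \<otimes> Z [^] k"
  using Z_pow_central[of g "int k"] by (simp add: int_pow_int)

lemma D_pow_Z_pow: "D [^] (int e * a) = Z [^] (a::int)"
  by (simp add: Z_def int_pow_pow flip: int_pow_int)

definition Z_bounded :: "'a set" where
  "Z_bounded = {g \<in> carrier G. \<exists>m::nat. Z [^] m \<otimes> g \<in> P}"

text \<open>\<open>Z_bounded\<close> is closed under products, since \<open>Z\<close> is central.\<close>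
lemma Z_bounded_mult:
  assumes "g \<in> Z_bounded" "h \<in> Z_bounded" shows "g \<otimes> h \<in> Z_bounded"
proof -
  obtain m1 m2 :: nat where g: "g \<in> carrier G" "Z [^] m1 \<otimes> g \<in> P" and h: "h \<in> carrier G" "Z [^] m2 \<otimes> h \<in> P"
    using assms by (auto simp: Z_bounded_def)
  have "Z [^] (m1 + m2) \<otimes> (g \<otimes> h) = Z [^] m1 \<otimes> (Z [^] m2 \<otimes> g) \<otimes> h"
    using g h by (simp add: nat_pow_mult[symmetric] m_assoc)
  also have "\<dots> = Z [^] m1 \<otimes> (g \<otimes> Z [^] m2) \<otimes> h" using Z_nat_pow_central[OF g(1)] by simp
  also have "\<dots> = (Z [^] m1 \<otimes> g) \<otimes> (Z [^] m2 \<otimes> h)" using g h by (simp add: m_assoc)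
  finally have "Z [^] (m1 + m2) \<otimes> (g \<otimes> h) \<in> P" using g h mult_P by simp
  then show ?thesis using g h unfolding Z_bounded_def by blast
qed

text \<open>If \<open>s t = D\<close> then \<open>Z s\<^sup>-\<^sup>1 = t D\<^sup>e\<^sup>-\<^sup>1\<close> is positive.\<close>
lemma inv_simple_Z_bounded:
  assumes s: "s \<in> simples" shows "inv s \<in> Z_bounded"
proof -
  from s obtain t where t: "t \<in> P" "s \<otimes> t = D" by (auto simp: simples_def lprefix_def)
  have sG: "s \<in> carrier G" using s simples_P by simp
  have "t \<otimes> inv D = inv s \<otimes> (s \<otimes> t) \<otimes> inv D" using sG t(1) by simp
  also have "\<dots> = inv s" using sG t by (simp add: m_assoc)
  finally have inv_s: "inv s = t \<otimes> inv D" ..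
  have De: "D [^] e = D \<otimes> D [^] (e - 1)" using e_pos nat_pow_Suc2[of D "e - 1"] by simp
  have "Z \<otimes> inv s = inv s \<otimes> Z" using sG by (simp add: Z_central)
  also have "\<dots> = t \<otimes> D [^] (e - 1)" using t by (simp add: inv_s Z_def De m_assoc)
  finally have "Z [^] (1::nat) \<otimes> inv s \<in> P" using t mult_P pow_P D_P by simp
  then show ?thesis using sG unfolding Z_bounded_def by blast
qed

text \<open>Inverses of positive elements are \<open>Z\<close>-bounded: write them as products of simples.\<close>
lemma inv_positive_Z_bounded:
  assumes p: "p \<in> P" shows "inv p \<in> Z_bounded"
proof -
  obtain xs where xs: "set xs \<subseteq> simples" "p = foldr (\<otimes>) xs \<one>" using product_of_simples p by blast
  have "inv (foldr (\<otimes>) xs \<one>) \<in> Z_bounded" using xs(1)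
  proof (induction xs)
    case Nil then show ?case using one_P by (auto simp: Z_bounded_def intro: exI[of _ 0])
  next
    case (Cons a xs)
    have F: "foldr (\<otimes>) xs \<one> \<in> carrier G"
      by (rule foldr_in_subgroup[OF subgroup_self]) (use Cons.prems simples_P in auto)
    have "inv (a \<otimes> foldr (\<otimes>) xs \<one>) = inv (foldr (\<otimes>) xs \<one>) \<otimes> inv a"
      using Cons.prems simples_P F by (simp add: inv_mult_group)
    then show ?case using Cons Z_bounded_mult inv_simple_Z_bounded by simp
  qed
  then show ?thesis using xs by simp
qed

lemma Z_shift: assumes "g \<in> carrier G" shows "\<exists>m::nat. Z [^] m \<otimes> g \<in> P"
proof -
  have "g \<in> generate G P" using assms generate_P by simp
  then have "g \<in> Z_bounded"
  proof (induction g rule: generate.induct)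
    case one then show ?case using one_P by (auto simp: Z_bounded_def intro: exI[of _ 0])
  next
    case (incl h) then show ?case by (auto simp: Z_bounded_def intro: exI[of _ 0])
  next
    case (inv h) then show ?case by (rule inv_positive_Z_bounded)
  next
    case (eng h1 h2) then show ?case using Z_bounded_mult by blast
  qed
  then show ?thesis by (simp add: Z_bounded_def)
qed

lemma Z_pow_mono:
  assumes "g \<in> carrier G" "Z [^] (m::nat) \<otimes> g \<in> P" "m \<le> m'" shows "Z [^] m' \<otimes> g \<in> P"
proof -
  have "Z [^] m' = Z [^] (m' - m) \<otimes> Z [^] m" using assms(3) by (simp add: nat_pow_mult)
  then have "Z [^] m' \<otimes> g = Z [^] (m' - m) \<otimes> (Z [^] m \<otimes> g)" using assms(1) by (simp add: m_assoc)
  then show ?thesis using assms mult_P pow_P Z_P by simp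
qed

text \<open>Any two elements have a join: shift both into \<open>P\<close> by a common power of \<open>Z\<close>, take the join
  there, and shift back (the order is invariant under left multiplication).\<close>
lemma join_pair:
  assumes g: "g \<in> carrier G" and h: "h \<in> carrier G" shows "\<exists>j. is_join {g, h} j"
proof -
  obtain m1 m2 :: nat where "Z [^] m1 \<otimes> g \<in> P" "Z [^] m2 \<otimes> h \<in> P" using Z_shift g h by blast
  then have a: "Z [^] max m1 m2 \<otimes> g \<in> P" and b: "Z [^] max m1 m2 \<otimes> h \<in> P"
    using Z_pow_mono g h by auto
  define W where "W = Z [^] max m1 m2"
  have WG: "W \<in> carrier G" by (simp add: W_def)
  obtain jj where jj: "jj \<in> P" "lprefix G P (W \<otimes> g) jj" "lprefix G P (W \<otimes> h) jj"
    "\<forall>c\<in>P. lprefix G P (W \<otimes> g) c \<and> lprefix G P (W \<otimes> h) c \<longrightarrow> lprefix G P jj c"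
    using prefix_lattice a b unfolding is_lattice_on_def W_def by blast
  define j where "j = inv W \<otimes> jj"
  have jG: "j \<in> carrier G" and Wj: "W \<otimes> j = jj" using jj WG by (simp_all add: j_def)
  have "g \<preceq> j" "h \<preceq> j"
    using leq_left_mult[OF WG _ jG] jj(2,3) lprefix_iff_leq a b jj(1) Wj g h W_def by auto
  moreover have "j \<preceq> c" if c: "c \<in> carrier G" "g \<preceq> c" "h \<preceq> c" for c
  proof -
    have 1: "W \<otimes> g \<preceq> W \<otimes> c" and 2: "W \<otimes> h \<preceq> W \<otimes> c" using leq_left_mult WG g h c by auto
    have "W \<otimes> c \<in> P" using leq_positive_above[OF a[folded W_def] _ 1] WG c by simp
    then have "lprefix G P jj (W \<otimes> c)" using jj(4) 1 2 lprefix_iff_leq a b WG c g h W_def by simp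
    then show ?thesis using lprefix_iff_leq leq_left_mult[OF WG jG c(1)] jj(1) Wj WG c by simp
  qed
  ultimately show ?thesis using jG unfolding is_join_def by blast
qed

lemma join_finite:
  assumes "finite A" "A \<noteq> {}" "A \<subseteq> carrier G" shows "\<exists>y. is_join A y"
  using assms
proof (induction A rule: finite_ne_induct)
  case (singleton x) then show ?case using leq_refl by (auto simp: is_join_def)
next
  case (insert x F)
  then obtain y where y: "is_join F y" by auto
  have "x \<in> carrier G" "y \<in> carrier G" using insert.prems y by (auto simp: is_join_def)
  then obtain j where j: "is_join {x, y} j" using join_pair by blast
  have "is_join (insert x F) j" unfolding is_join_def
  proof (intro conjI ballI impI)
    show jG: "j \<in> carrier G" using j by (simp add: is_join_def)
    fix a assume a: "a \<in> insert x F"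
    show "a \<preceq> j"
    proof (cases "a = x")
      case True then show ?thesis using j by (simp add: is_join_def)
    next
      case False
      then have "a \<preceq> y" "a \<in> carrier G" using a y insert.prems by (auto simp: is_join_def)
      moreover have "y \<preceq> j" using j by (simp add: is_join_def)
      ultimately show ?thesis using leq_trans \<open>y \<in> carrier G\<close> jG by blast
    qed
  next
    fix c assume "c \<in> carrier G" "\<forall>a\<in>insert x F. a \<preceq> c"
    then show "j \<preceq> c" using j y unfolding is_join_def by simp
  qed
  then show ?case by blast
qed


lemma power_join_lower:
  assumes x: "x \<in> carrier G" and c: "c \<in> P" "\<And>g. g \<in> carrier G \<Longrightarrow> c \<otimes> g = g \<otimes> c"
    and xn: "x [^] (n::nat) = c" and y: "is_join ((\<lambda>k. x [^] k) ` {..<n}) y" and k: "k < n"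
  shows "y \<preceq> x [^] k \<otimes> y"
proof -
  have yG: "y \<in> carrier G" and below: "j < n \<Longrightarrow> x [^] j \<preceq> y" for j :: nat using y by (auto simp: is_join_def)
  have "inv (x [^] k) \<otimes> x [^] j \<preceq> y" if j: "j < n" for j
  proof (cases "k \<le> j")
    case True
    then have "x [^] j = x [^] k \<otimes> x [^] (j - k)" using x by (simp add: nat_pow_mult)
    then have "inv (x [^] k) \<otimes> x [^] j = x [^] (j - k)" using x by simp
    then show ?thesis using below j by simp
  next
    case False
    define w where "w = x [^] (j + n - k)"
    have wG: "w \<in> carrier G" and xkG: "x [^] k \<in> carrier G" using x by (simp_all add: w_def)
    have "c \<in> commutant G (x [^] k)" using c xkG by (simp add: commutant_def)
    then have "inv c \<in> commutant G (x [^] k)"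
      using subgroup.m_inv_closed[OF commutant_subgroup[OF xkG]] by blast
    then have ic: "x [^] k \<otimes> inv c = inv c \<otimes> x [^] k" by (simp add: commutant_def)
    have "k + (j + n - k) = n + j" using False k by arith
    then have "x [^] k \<otimes> w = x [^] (n + j)" using x by (simp add: w_def nat_pow_mult)
    also have "\<dots> = c \<otimes> x [^] j" using x xn by (simp flip: nat_pow_mult)
    finally have xkw: "x [^] k \<otimes> w = c \<otimes> x [^] j" .
    have "x [^] k \<otimes> (inv c \<otimes> w) = (x [^] k \<otimes> inv c) \<otimes> w"
      using xkG wG c(1) by (simp add: m_assoc)
    also have "\<dots> = inv c \<otimes> (x [^] k \<otimes> w)" using ic xkG wG c(1) by (simp add: m_assoc)
    also have "\<dots> = x [^] j" using xkw x c(1) by simp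
    finally have "x [^] k \<otimes> (inv c \<otimes> w) = x [^] j" .
    then have "inv (x [^] k) \<otimes> x [^] j = inv (x [^] k) \<otimes> (x [^] k \<otimes> (inv c \<otimes> w))" by simp
    also have "\<dots> = inv c \<otimes> w" using xkG wG c by simp
    finally have "inv (x [^] k) \<otimes> x [^] j = inv c \<otimes> w" .
    moreover have "w \<preceq> y" using below False j by (simp add: w_def)
    ultimately show ?thesis using leq_trans[of "inv c \<otimes> w" w y] leq_inv_central[OF c wG] wG yG c(1) by simp
  qed
  then have "x [^] j \<preceq> x [^] k \<otimes> y" if "j < n" for j
    using that leq_left_mult[of "inv (x [^] k)" "x [^] j" "x [^] k \<otimes> y"] x yG by simp
  then show ?thesis using y x yG unfolding is_join_def by auto
qed

lemma power_join_upper: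
  assumes x: "x \<in> carrier G" and c: "c \<in> P" "\<And>g. g \<in> carrier G \<Longrightarrow> c \<otimes> g = g \<otimes> c"
    and xn: "x [^] (n::nat) = c" and y: "is_join ((\<lambda>k. x [^] k) ` {..<n}) y" and k: "k < n"
  shows "x [^] k \<otimes> y \<preceq> y \<otimes> c"
proof -
  have yG: "y \<in> carrier G" and below: "j < n \<Longrightarrow> x [^] j \<preceq> y" for j :: nat using y by (auto simp: is_join_def)
  have ycG: "y \<otimes> c \<in> carrier G" and xkG: "x [^] k \<in> carrier G" using yG c(1) x by simp_all
  have "x [^] k \<otimes> x [^] j \<preceq> y \<otimes> c" if j: "j < n" for j
  proof (cases "k + j < n")
    case True
    then have "x [^] (k + j) \<preceq> y" by (rule below)
    then show ?thesis
      using leq_trans[OF _ yG ycG _ leq_times_positive[OF yG c(1)]] x by (simp add: nat_pow_mult)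
  next
    case False
    then have "x [^] k \<otimes> x [^] j = x [^] (k + j - n) \<otimes> x [^] n" using x by (simp add: nat_pow_mult)
    moreover have "x [^] (k + j - n) \<preceq> y" using below k j by simp
    ultimately show ?thesis using leq_mult_central[OF c] x yG xn by simp
  qed
  then have "x [^] j \<preceq> inv (x [^] k) \<otimes> (y \<otimes> c)" if "j < n" for j
    using that leq_left_mult[of "x [^] k" "x [^] j" "inv (x [^] k) \<otimes> (y \<otimes> c)"] x ycG by simp
  then have "y \<preceq> inv (x [^] k) \<otimes> (y \<otimes> c)" using y xkG ycG unfolding is_join_def by auto
  then show ?thesis using leq_left_mult[of "x [^] k" y "inv (x [^] k) \<otimes> (y \<otimes> c)"] xkG yG ycG by simp
qed

lemma join_of_powers:
  assumes "x \<in> carrier G" "(n::nat) > 0" obtains y where "is_join ((\<lambda>k. x [^] k) ` {..<n}) y"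
  using join_finite[of "(\<lambda>k. x [^] k) ` {..<n}"] assms by auto

text \<open>\<open>G\<close> is torsion-free: if \<open>x\<^sup>n = 1\<close>, the sandwich with \<open>c = 1\<close> gives \<open>x y = y\<close>.\<close>
lemma torsion_free:
  assumes x: "x \<in> carrier G" and n: "n > 0" and xn: "x [^] (n::nat) = \<one>" shows "x = \<one>"
proof (cases "n = 1")
  case True then show ?thesis using xn x by simp
next
  case False
  obtain y where y: "is_join ((\<lambda>k. x [^] k) ` {..<n}) y" using join_of_powers x n by blast
  then have yG: "y \<in> carrier G" by (simp add: is_join_def)
  have one_central: "\<And>g. g \<in> carrier G \<Longrightarrow> \<one> \<otimes> g = g \<otimes> \<one>" by simp
  have one_less: "1 < n" using n False by simp
  have "y \<preceq> x \<otimes> y" using power_join_lower[OF x one_P one_central xn y one_less] x by simp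
  moreover have "x \<otimes> y \<preceq> y" using power_join_upper[OF x one_P one_central xn y one_less] x yG by simp
  ultimately have "x \<otimes> y = y" using leq_antisym x yG by simp
  then show ?thesis using x yG by simp
qed

text \<open>Since \<open>G\<close> is torsion-free and \<open>D \<noteq> 1\<close>, also \<open>Z \<noteq> 1\<close>.\<close>
lemma Z_nontrivial: "Z \<noteq> \<one>"
  using torsion_free[OF D_carrier e_pos] D_nontrivial by (auto simp: Z_def)

text \<open>The positive prefixes of \<open>Z\<close>: a finite set, as their length is bounded by that of \<open>Z\<close>.\<close>
definition Z_prefixes :: "'a set" where "Z_prefixes = {p \<in> P. p \<preceq> Z}"

lemma finite_Z_prefixes: "finite Z_prefixes"
proof (rule finite_subset[OF _ finite_bounded_length[of "\<nu> Z"]])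
  show "Z_prefixes \<subseteq> {p \<in> P. \<nu> p \<le> \<nu> Z}"
  proof
    fix p assume "p \<in> Z_prefixes"
    then have p: "p \<in> P" "inv p \<otimes> Z \<in> P" by (auto simp: Z_prefixes_def leL_def)
    then have "\<nu> (p \<otimes> (inv p \<otimes> Z)) \<ge> \<nu> p" using nu_super by fastforce
    then show "p \<in> {p \<in> P. \<nu> p \<le> \<nu> Z}" using p by simp
  qed
qed

text \<open>Roots of \<open>Z\<close> have bounded order: if \<open>x\<^sup>n = Z\<close>, the conjugates \<open>y\<^sup>-\<^sup>1 x\<^sup>k y\<close> (\<open>k < n\<close>)
  of its powers by the join \<open>y\<close> of \<open>1, \<dots>, x\<^sup>n\<^sup>-\<^sup>1\<close> are \<open>n\<close> distinct prefixes of \<open>Z\<close>.\<close>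
lemma root_of_Z_bound:
  assumes x: "x \<in> carrier G" and n: "n > 0" and xn: "x [^] (n::nat) = Z"
  shows "n \<le> card Z_prefixes"
proof -
  obtain y where y: "is_join ((\<lambda>k. x [^] k) ` {..<n}) y" using join_of_powers x n by blast
  then have yG: "y \<in> carrier G" by (simp add: is_join_def)
  define conj where "conj k = inv y \<otimes> (x [^] k \<otimes> y)" for k :: nat
  have "conj k \<in> Z_prefixes" if k: "k < n" for k
  proof -
    note sandwich = power_join_lower[OF x Z_P Z_central xn y k] power_join_upper[OF x Z_P Z_central xn y k]
    have "conj k \<in> P" using sandwich(1) by (simp add: leL_def conj_def)
    moreover have "conj k \<preceq> inv y \<otimes> (y \<otimes> Z)"
      using leq_left_mult[of "inv y" "x [^] k \<otimes> y" "y \<otimes> Z"] sandwich(2) x yG by (simp add: conj_def)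
    ultimately show ?thesis using yG by (simp add: Z_prefixes_def)
  qed
  moreover have "inj_on conj {..<n}"
  proof (rule inj_onI)
    fix k j assume kj: "k \<in> {..<n}" "j \<in> {..<n}" "conj k = conj j"
    then have eq: "x [^] k = x [^] j" using x yG by (simp add: conj_def)
    show "k = j"
    proof (rule ccontr)
      assume "k \<noteq> j"
      then have "x [^] (max k j - min k j) = \<one>" "max k j - min k j > 0"
        using pow_eq_div2[OF x eq] pow_eq_div2[OF x eq[symmetric]] by (auto simp: max_def min_def)
      then have "x = \<one>" using torsion_free x by blast
      then show False using xn Z_nontrivial by simp
    qed
  qed
  ultimately have "card {..<n} \<le> card Z_prefixes"
    using card_inj_on_le[of conj "{..<n}" Z_prefixes] finite_Z_prefixes by blast
  then show ?thesis by simp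
qed


lemma leq_D_pow_iff: "g \<in> carrier G \<Longrightarrow> D [^] (r::int) \<preceq> g \<longleftrightarrow> D [^] (-r) \<otimes> g \<in> P"
  by (simp add: leL_def int_pow_neg)

text \<open>The powers of \<open>D\<close> below \<open>g\<close> form a nonempty set of integers (by \<open>Z_shift\<close>) that is bounded
  above (a large power of \<open>D\<close> below \<open>g\<close> would make some positive element too long).\<close>
lemma D_powers_below_bounded:
  assumes g: "g \<in> carrier G"
  shows "\<exists>(r0::int) B. D [^] r0 \<preceq> g \<and> (\<forall>r::int. D [^] r \<preceq> g \<longrightarrow> r \<le> B)"
proof -
  obtain m :: nat where m: "Z [^] m \<otimes> g \<in> P" using Z_shift g by blast
  define r0 where "r0 = - int (e * m)"
  have "D [^] (-r0) = D [^] (e * m)" unfolding r0_def by (simp flip: int_pow_int)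
  also have "\<dots> = Z [^] m" by (simp add: Z_def nat_pow_pow)
  finally have "D [^] (-r0) = Z [^] m" .
  then have r0: "D [^] r0 \<preceq> g" using leq_D_pow_iff g m by simp
  define B where "B = r0 + int (\<nu> (D [^] (-r0) \<otimes> g))"
  have "r \<le> B" if r: "D [^] r \<preceq> g" for r
  proof (cases "r \<le> r0")
    case False
    define k where "k = nat (r - r0)"
    have "int k = r - r0" using False by (simp add: k_def)
    then have "D [^] k = D [^] (r - r0)" by (metis int_pow_int)
    then have "D [^] (-r0) = D [^] k \<otimes> D [^] (-r)" using int_pow_mult[OF D_carrier, of "r - r0" "-r"] by simp
    then have "D [^] (-r0) \<otimes> g = D [^] k \<otimes> (D [^] (-r) \<otimes> g)" using g by (simp add: m_assoc)
    moreover have "D [^] (-r) \<otimes> g \<in> P" using r leq_D_pow_iff g by simp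
    ultimately have "\<nu> (D [^] (-r0) \<otimes> g) \<ge> \<nu> (D [^] k)"
      using nu_super[OF pow_P[OF D_P, of k]] by fastforce
    then show ?thesis using nu_D_pow[OF D_nontrivial, of k] False by (simp add: k_def B_def)
  qed (simp add: B_def)
  then show ?thesis using r0 by blast
qed

lemma ginf_char:
  assumes "g \<in> carrier G"
  shows "D [^] ginf G P D g \<preceq> g" and "\<And>r. D [^] r \<preceq> g \<Longrightarrow> r \<le> ginf G P D g"
  using D_powers_below_bounded[OF assms] int_Greatest[of "\<lambda>r. D [^] r \<preceq> g"] unfolding ginf_def by blast+

lemma ginf_eqI:
  assumes "D [^] r \<preceq> g" "\<And>s::int. D [^] s \<preceq> g \<Longrightarrow> s \<le> r" shows "ginf G P D g = r"
  unfolding ginf_def using assms by (rule Greatest_equality)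

text \<open>\<open>inf(D\<^sup>c g) = c + inf(g)\<close>, because left multiplication preserves the prefix order.\<close>
lemma ginf_shift:
  assumes g: "g \<in> carrier G" shows "ginf G P D (D [^] (c::int) \<otimes> g) = c + ginf G P D g"
proof (rule ginf_eqI)
  have shift: "D [^] s \<preceq> D [^] c \<otimes> g \<longleftrightarrow> D [^] (s - c) \<preceq> g" for s :: int
  proof -
    have "D [^] s = D [^] c \<otimes> D [^] (s - c)" using int_pow_mult[OF D_carrier, of c "s - c"] by simp
    then show ?thesis using leq_left_mult[of "D [^] c" "D [^] (s - c)" g] g by simp
  qed
  show "D [^] (c + ginf G P D g) \<preceq> D [^] c \<otimes> g" using shift ginf_char(1)[OF g] by simp
  fix s :: int assume "D [^] s \<preceq> D [^] c \<otimes> g"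
  then show "s \<le> c + ginf G P D g" using shift ginf_char(2)[OF g, of "s - c"] by simp
qed

text \<open>For an element with \<open>g\<^sup>N = D\<^sup>c\<close>, the sequence \<open>inf(g\<^sup>n)\<close> grows by exactly \<open>c\<close> every \<open>N\<close> steps,
  so \<open>INF(g) = c/N\<close>.\<close>
lemma gINF_of_root:
  assumes g: "g \<in> carrier G" and N: "N > 0" and gN: "g [^] (N::nat) = D [^] (c::int)"
  shows "gINF G P D g = real_of_int c / real N"
proof -
  define f where "f n = ginf G P D (g [^] (n::nat))" for n
  have "f n = c * int (n div N) + f (n mod N)" for n
  proof -
    have "g [^] n = (g [^] N) [^] (n div N) \<otimes> g [^] (n mod N)"
      using g by (simp add: nat_pow_pow nat_pow_mult)
    also have "(g [^] N) [^] (n div N) = (D [^] c) [^] (n div N)" by (simp only: gN)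
    also have "\<dots> = D [^] (c * int (n div N))" by (simp add: int_pow_pow flip: int_pow_int)
    finally show ?thesis using ginf_shift g by (simp add: f_def)
  qed
  then have "(\<lambda>n. real_of_int (f n) / real n) \<longlonglongrightarrow> real_of_int c / real N"
    by (rule quasilinear_limit[OF N])
  then show ?thesis unfolding gINF_def f_def by (rule limI)
qed

lemma gINF_of_Z_root:
  assumes "g \<in> carrier G" "N > 0" "g [^] (N::nat) = Z [^] (a::int)"
  shows "gINF G P D g = real e * real_of_int a / real N"
  using gINF_of_root[of g N "int e * a"] assms by (simp add: D_pow_Z_pow)

text \<open>A periodic element has a positive power that is a power of the central element \<open>Z\<close>:
  from \<open>h\<^sup>k = x D\<^sup>l x\<^sup>-\<^sup>1\<close> we get \<open>h\<^sup>k\<^sup>e = x Z\<^sup>l x\<^sup>-\<^sup>1 = Z\<^sup>l\<close>.\<close>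
lemma periodic_Z_root:
  assumes h: "h \<in> carrier G" and per: "periodic G D h"
  shows "\<exists>N::nat. N > 0 \<and> (\<exists>a::int. h [^] N = Z [^] a)"
proof (cases "h = \<one>")
  case True then show ?thesis by (intro exI[of _ 1]) (auto intro: exI[of _ 0])
next
  case False
  then obtain k l :: int and x where kl: "k \<noteq> 0" "x \<in> carrier G"
    "h [^] k = x \<otimes> D [^] l \<otimes> inv x" using per by (auto simp: periodic_def)
  have "h [^] (k * int e) = (h [^] k) [^] int e" using h by (simp add: int_pow_pow)
  also have "\<dots> = (x \<otimes> D [^] l \<otimes> inv x) [^] e" by (simp add: kl(3) int_pow_int)
  also have "\<dots> = x \<otimes> (D [^] l) [^] e \<otimes> inv x" using kl(2) by (simp add: conj_nat_pow)
  also have "(D [^] l) [^] e = Z [^] l"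
    by (simp add: Z_def int_pow_pow mult.commute flip: int_pow_int)
  also have "x \<otimes> Z [^] l \<otimes> inv x = Z [^] l" using kl(2) by (simp add: Z_pow_central m_assoc)
  finally show ?thesis by (rule positive_root[OF h Z_carrier, rotated]) (use kl(1) e_pos in simp)
qed

text \<open>If \<open>h\<^sup>N\<^sup>' \<^sup>d = Z\<^sup>a\<^sup>' \<^sup>d\<close> then already \<open>h\<^sup>N\<^sup>' = Z\<^sup>a\<^sup>'\<close>, by torsion-freeness.\<close>
lemma reduce_Z_root:
  assumes h: "h \<in> carrier G" and d: "d > 0" and hN: "h [^] (N' * d) = Z [^] (a' * d :: int)"
  shows "h [^] (N'::int) = Z [^] a'"
proof -
  define w where "w = h [^] N' \<otimes> Z [^] (-a')"
  have wG: "w \<in> carrier G" using h by (simp add: w_def)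
  have "w [^] d = h [^] (N' * d) \<otimes> Z [^] (- a' * d)"
    unfolding w_def using h Z_pow_central[of "h [^] N'" "-a'"] by (simp add: int_pow_mult_distrib int_pow_pow)
  also have "\<dots> = \<one>" using hN by (simp add: int_pow_mult[symmetric])
  finally have "w [^] nat d = \<one>" using d by (simp add: pow_nat)
  then have "w = \<one>" using torsion_free[OF wG, of "nat d"] d by simp
  then have "inv (Z [^] (-a')) = h [^] N'" using h by (intro inv_equality) (simp_all add: w_def)
  then show ?thesis by (simp add: int_pow_neg)
qed

text \<open>If \<open>h\<^sup>N = Z\<^sup>a\<close> with \<open>N, a\<close> coprime, then \<open>Z\<close> has an \<open>N\<close>-th root, namely \<open>h\<^sup>u Z\<^sup>v\<close>
  where \<open>u a + v N = 1\<close>.\<close>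
lemma coprime_Z_root:
  assumes h: "h \<in> carrier G" and hN: "h [^] (N::int) = Z [^] a" and cop: "coprime N a"
  shows "\<exists>x\<in>carrier G. x [^] N = Z"
proof -
  obtain u v where uv: "u * a + v * N = 1"
    using bezout_int[of a N] cop by (auto simp: coprime_iff_gcd_eq_1 gcd.commute)
  define x where "x = h [^] u \<otimes> Z [^] v"
  have "x [^] N = (h [^] N) [^] u \<otimes> Z [^] (v * N)"
    unfolding x_def using h Z_pow_central[of "h [^] u" v]
    by (simp add: int_pow_mult_distrib int_pow_pow mult.commute)
  also have "\<dots> = Z [^] (u * a + v * N)" using hN by (simp add: int_pow_pow int_pow_mult mult.commute)
  finally show ?thesis using uv h by (auto simp: x_def)
qed

text \<open>The values of \<open>INF\<close> on elements with a power in \<open>\<langle>Z\<rangle>\<close> have bounded denominators: in lowest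
  terms \<open>INF(h) = e a'/N'\<close> where \<open>Z\<close> has an \<open>N'\<close>-th root, so \<open>N' \<le> #prefixes(Z)\<close>.\<close>
lemma gINF_denominator:
  assumes h: "h \<in> carrier G" and N: "N > 0" and hN: "h [^] (N::nat) = Z [^] (a::int)"
  shows "\<exists>z::int. gINF G P D h = real_of_int z / fact (card Z_prefixes)"
proof -
  define d where "d = gcd (int N) a"
  have d: "d > 0" using N by (simp add: d_def)
  obtain N' a' where Na: "int N = N' * d" "a = a' * d" "coprime N' a'"
    using gcd_coprime_exists[of "int N" a] d unfolding d_def by auto
  have "0 < N' * d" using N by (simp flip: Na(1))
  then have N': "N' > 0" using d by (rule zero_less_mult_pos2)
  have "h [^] (N' * d) = Z [^] (a' * d)" unfolding Na(1)[symmetric] Na(2)[symmetric] int_pow_int by (rule hN)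
  then have "h [^] N' = Z [^] a'" by (rule reduce_Z_root[OF h d])
  then obtain x where x: "x \<in> carrier G" "x [^] N' = Z" using coprime_Z_root[OF h _ Na(3)] by blast
  then have "x [^] nat N' = Z" using N' by (simp add: pow_nat)
  then have "nat N' \<le> card Z_prefixes" using root_of_Z_bound[OF x(1)] N' by simp
  then have "nat N' dvd fact (card Z_prefixes)" using N' by (intro dvd_fact) auto
  then obtain t where t: "fact (card Z_prefixes) = nat N' * t" by (auto elim: dvdE)
  have t_pos: "t > 0" using t by (metis fact_nonzero mult_0_right neq0_conv)
  have real_fact: "(fact (card Z_prefixes) :: real) = real_of_int N' * real t"
  proof -
    have "(fact (card Z_prefixes) :: real) = real (nat N' * t)" by (simp flip: t)
    then show ?thesis using N' by simp
  qed
  have real_N: "real N = real_of_int N' * real_of_int d" by (metis Na(1) of_int_mult of_int_of_nat_eq)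
  have "gINF G P D h = real e * real_of_int a / real N" by (rule gINF_of_Z_root[OF h N hN])
  also have "\<dots> = real_of_int (int e * a' * int t) / fact (card Z_prefixes)"
    using d N' t_pos unfolding real_fact real_N Na(2) by (simp add: field_simps)
  finally show ?thesis by blast
qed


lemma common_Z_root:
  assumes "g \<in> carrier G" "periodic G D g" "h \<in> carrier G" "periodic G D h"
  shows "\<exists>N::nat. N > 0 \<and> (\<exists>(a::int) (b::int). g [^] N = Z [^] a \<and> h [^] N = Z [^] b)"
proof -
  obtain N1 :: nat and a :: int where g: "N1 > 0" "g [^] N1 = Z [^] a" using periodic_Z_root assms(1,2) by blast
  obtain N2 :: nat and b :: int where h: "N2 > 0" "h [^] N2 = Z [^] b" using periodic_Z_root assms(3,4) by blast
  have pow_mult: "x [^] (M * K) = Z [^] (c * int K)" if "x \<in> carrier G" "x [^] M = Z [^] c" for x and M K :: nat and c :: int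
  proof -
    have "x [^] (M * K) = (x [^] M) [^] K" using that(1) by (simp add: nat_pow_pow)
    also have "\<dots> = (Z [^] c) [^] K" by (simp only: that(2))
    also have "\<dots> = Z [^] (c * int K)" by (simp add: int_pow_pow flip: int_pow_int)
    finally show ?thesis .
  qed
  have "g [^] (N1 * N2) = Z [^] (a * int N2)" by (rule pow_mult[OF assms(1) g(2)])
  moreover have "h [^] (N1 * N2) = Z [^] (b * int N1)"
    using pow_mult[OF assms(3) h(2), of N1] by (simp only: mult.commute)
  moreover have "N1 * N2 > 0" using g(1) h(1) by simp
  ultimately show ?thesis by blast
qed

text \<open>\<open>INF\<close> is additive on commuting periodic elements: a common power of both lies in \<open>\<langle>Z\<rangle>\<close>.\<close>
lemma gINF_mult:
  assumes g: "g \<in> carrier G" "periodic G D g" and h: "h \<in> carrier G" "periodic G D h"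
    and gh: "g \<otimes> h = h \<otimes> g"
  shows "gINF G P D (g \<otimes> h) = gINF G P D g + gINF G P D h"
proof -
  obtain N :: nat and a b :: int where N: "N > 0" "g [^] N = Z [^] a" "h [^] N = Z [^] b"
    using common_Z_root[OF g h] by blast
  have "(g \<otimes> h) [^] N = Z [^] (a + b)" using pow_mult_distrib[OF gh g(1) h(1)] N by (simp add: int_pow_mult)
  then have "gINF G P D (g \<otimes> h) = real e * real_of_int (a + b) / real N"
    using gINF_of_Z_root g(1) h(1) N(1) by simp
  then show ?thesis using gINF_of_Z_root[OF g(1) N(1,2)] gINF_of_Z_root[OF h(1) N(1,3)]
    by (simp add: add_divide_distrib distrib_left)
qed

text \<open>\<open>INF\<close> separates commuting periodic elements: equal values give \<open>(g h\<^sup>-\<^sup>1)\<^sup>N = 1\<close>.\<close>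
lemma gINF_inj:
  assumes g: "g \<in> carrier G" "periodic G D g" and h: "h \<in> carrier G" "periodic G D h"
    and gh: "g \<otimes> h = h \<otimes> g" and eq: "gINF G P D g = gINF G P D h"
  shows "g = h"
proof -
  obtain N :: nat and a b :: int where N: "N > 0" "g [^] N = Z [^] a" "h [^] N = Z [^] b"
    using common_Z_root[OF g h] by blast
  have "a = b" using eq gINF_of_Z_root[OF g(1) N(1,2)] gINF_of_Z_root[OF h(1) N(1,3)] N(1) e_pos by simp
  then have gh_N: "g [^] N = h [^] N" using N by simp
  have "h \<in> commutant G g" using gh h by (simp add: commutant_def)
  then have "inv h \<in> commutant G g" using subgroup.m_inv_closed[OF commutant_subgroup[OF g(1)]] by blast
  then have "g \<otimes> inv h = inv h \<otimes> g" by (simp add: commutant_def)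
  then have "(g \<otimes> inv h) [^] N = g [^] N \<otimes> inv (h [^] N)"
    using pow_mult_distrib[of g "inv h" N] g h by (simp add: nat_pow_inv)
  then have "(g \<otimes> inv h) [^] N = \<one>" using gh_N h by simp
  then have "g \<otimes> inv h = \<one>" using torsion_free g h N(1) by simp
  then show ?thesis using g h by (metis inv_equality inv_inv inv_closed)
qed

text \<open>The values of \<open>INF\<close> on \<open>H\<close> lie in
  \<open>(1/K!)\<int>\<close> with \<open>K = #prefixes(Z)\<close>, so \<open>H\<close> embeds in a cyclic group.\<close>
theorem abelian_periodic_subgroup_nondegenerate:
  assumes H: "subgroup H G" and comm: "\<forall>a\<in>H. \<forall>b\<in>H. a \<otimes> b = b \<otimes> a"
    and per: "\<forall>h\<in>H. periodic G D h"
  shows "(\<forall>h\<in>H. gINF G P D h \<in> \<rat>)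
    \<and> (\<forall>g\<in>H. \<forall>h\<in>H. gINF G P D (g \<otimes> h) = gINF G P D g + gINF G P D h)
    \<and> inj_on (gINF G P D) H
    \<and> (\<exists>h\<in>H. H = generate G {h})"
proof -
  have HG: "\<And>h. h \<in> H \<Longrightarrow> h \<in> carrier G" using subgroup.subset[OF H] by blast
  have root: "\<exists>N::nat. N > 0 \<and> (\<exists>a::int. h [^] N = Z [^] a)" if "h \<in> H" for h
    using periodic_Z_root[OF HG[OF that]] per that by blast
  have rat: "gINF G P D h \<in> \<rat>" if h: "h \<in> H" for h
  proof -
    obtain N :: nat and a :: int where "N > 0" "h [^] N = Z [^] a" using root[OF h] by blast
    then have "gINF G P D h = real e * real_of_int a / real N" by (rule gINF_of_Z_root[OF HG[OF h]])
    then show ?thesis by simp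
  qed
  have add: "gINF G P D (g \<otimes> h) = gINF G P D g + gINF G P D h" if gh: "g \<in> H" "h \<in> H" for g h
    using gINF_mult[OF HG[OF gh(1)] _ HG[OF gh(2)] _ comm[rule_format, OF gh]] per gh by blast
  have inj: "inj_on (gINF G P D) H"
  proof (rule inj_onI)
    fix g h assume gh: "g \<in> H" "h \<in> H" and eq: "gINF G P D g = gINF G P D h"
    show "g = h" using gINF_inj[OF HG[OF gh(1)] _ HG[OF gh(2)] _ comm[rule_format, OF gh] eq] per gh by blast
  qed
  have lattice: "\<exists>z::int. gINF G P D h = 1 / fact (card Z_prefixes) * real_of_int z" if h: "h \<in> H" for h
  proof -
    obtain N :: nat and a :: int where "N > 0" "h [^] N = Z [^] a" using root[OF h] by blast
    then obtain z :: int where "gINF G P D h = real_of_int z / fact (card Z_prefixes)"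
      using gINF_denominator[OF HG[OF h]] by blast
    then show ?thesis by auto
  qed
  have "\<exists>h\<in>H. H = generate G {h}"
    by (rule lattice_hom_cyclic[OF H add inj _ lattice]) simp_all
  then show ?thesis using rat add inj by blast
qed

end

theorem (in garside) abelian_periodic_subgroup:
  assumes H: "subgroup H G" and comm: "\<forall>a\<in>H. \<forall>b\<in>H. a \<otimes> b = b \<otimes> a"
    and per: "\<forall>h\<in>H. periodic G D h"
  shows "(\<forall>h\<in>H. gINF G P D h \<in> \<rat>)
    \<and> (\<forall>g\<in>H. \<forall>h\<in>H. gINF G P D (g \<otimes> h) = gINF G P D g + gINF G P D h)
    \<and> inj_on (gINF G P D) H
    \<and> (\<exists>h\<in>H. H = generate G {h})"
proof (cases "D = \<one>")
  case True
  then have H1: "H = {\<one>}" using trivial_if_D_one subgroup.subset[OF H] subgroup.one_closed[OF H] by blast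
  have "gINF G P D \<one> = 0"
    unfolding gINF_def by (rule limI) (simp add: lim_const_over_n)
  then show ?thesis using H1 generate_pow[of \<one>] by auto
next
  case False
  obtain e :: nat where "e > 0" "\<forall>g\<in>carrier G. D [^] e \<otimes> g = g \<otimes> D [^] e" using D_power_central by blast
  then interpret garside_central G P D \<nu> e using False by unfold_locales auto
  show ?thesis by (rule abelian_periodic_subgroup_nondegenerate[OF H comm per])
qed

lemma garside_group_imp_garside:
  assumes "garside_group G P D" shows "\<exists>\<nu>. garside G P D \<nu>"
proof -
  obtain \<nu> :: "'a \<Rightarrow> nat" where "\<forall>a\<in>P. a \<noteq> \<one>\<^bsub>G\<^esub> \<longrightarrow> \<nu> a > 0"
    "\<forall>a\<in>P. \<forall>b\<in>P. \<nu> (a \<otimes>\<^bsub>G\<^esub> b) \<ge> \<nu> a + \<nu> b"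
    using assms unfolding garside_group_def by blast
  then have "garside G P D \<nu>" using assms unfolding garside_group_def garside_def garside_axioms_def by auto
  then show ?thesis by blast
qed

theorem mainTheorem8:
  fixes G :: "('a, 'b) monoid_scheme" and P :: "'a set" and D :: 'a and H :: "'a set"
  assumes "garside_group G P D"
    and "subgroup H G"
    and "\<forall>a\<in>H. \<forall>b\<in>H. a \<otimes>\<^bsub>G\<^esub> b = b \<otimes>\<^bsub>G\<^esub> a"
    and "\<forall>h\<in>H. periodic G D h"
  shows "(\<forall>h\<in>H. gINF G P D h \<in> \<rat>)
    \<and> (\<forall>g\<in>H. \<forall>h\<in>H. gINF G P D (g \<otimes>\<^bsub>G\<^esub> h) = gINF G P D g + gINF G P D h)
    \<and> inj_on (gINF G P D) H
    \<and> (\<exists>h\<in>H. H = generate G {h})"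
proof -
  obtain \<nu> where "garside G P D \<nu>" using garside_group_imp_garside[OF assms(1)] by blast
  then interpret garside G P D \<nu> .
  show ?thesis by (rule abelian_periodic_subgroup[OF assms(2-4)])
qed

end
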